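(* Let $d>1$ and $\mathbf{a}=(a_0,\dots,a_{d+1})\in\mathbb{Z}^{d+2}$ with $\sum a_i=0$, all $a_i\neq0$, $a_i>0$ for $i\le p$ and $a_i<0$ for $i>p$, where $p\ge1$. For every $t\in\mathbb{C}^*$, the set of critical values of $\Psi^t:F^\circ_t\to P_1$ equals $W_{\mathbf{c}}^{-1}\big((-1)^{c_2}t/q_{\mathbf{b}}\big)$.
   Context: $P_m=\{[Z_0:\dots:Z_{m+1}]\in\mathbb{P}^{m+1}:\sum Z_i=0,\ Z_i\neq0\}$ and, for $\mathbf{e}\in\mathbb{Z}^{m+2}$, $W_{\mathbf{e}}=\prod Z_i^{e_i}:P_m\to\mathbb{C}^*$. $\mathbf{b}=(b_0,\dots,b_d)=(a_0+a_1,a_2,\dots,a_{d+1})$, $\mathbf{c}=(c_0,c_1,c_2)=(a_0,a_1,-a_0-a_1)$, $q_{\mathbf{b}}=\prod_{i=0}^d b_i^{b_i}$ (the unique critical value of $W_{\mathbf{b}}$). $F^\circ_t=W_{\mathbf{a}}^{-1}(t)\cap\{Z_0+Z_1\neq0\}\subset P_d$ and $\Psi^t(Z)=[Z_0:Z_1:-Z_0-Z_1]\in P_1$. *)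

theory Defs
  imports "HOL-Analysis.Analysis"
begin

text \<open>Points of P^{m+1} are represented by vectors z :: nat => complex supported on
  indices 0..m+1; a projective point is the set of nonzero multiples of a representative.\<close>

definition proj_pt :: "(nat \<Rightarrow> complex) \<Rightarrow> (nat \<Rightarrow> complex) set" where
  "proj_pt z = {w. \<exists>c. c \<noteq> 0 \<and> w = (\<lambda>i. c * z i)}"

definition Pvecs :: "nat \<Rightarrow> (nat \<Rightarrow> complex) set" where
  "Pvecs m = {z. (\<forall>i\<le>m+1. z i \<noteq> 0) \<and> (\<forall>i>m+1. z i = 0) \<and> (\<Sum>i\<le>m+1. z i) = 0}"

definition Pspace :: "nat \<Rightarrow> (nat \<Rightarrow> complex) set set" where
  "Pspace m = proj_pt ` Pvecs m"

text \<open>W_e on representatives, and on projective points (well defined when the e_i sum to 0).\<close>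
definition Wvec :: "nat \<Rightarrow> (nat \<Rightarrow> int) \<Rightarrow> (nat \<Rightarrow> complex) \<Rightarrow> complex" where
  "Wvec m e z = (\<Prod>i\<le>m+1. z i powi e i)"

definition W :: "nat \<Rightarrow> (nat \<Rightarrow> int) \<Rightarrow> (nat \<Rightarrow> complex) set \<Rightarrow> complex" where
  "W m e P = (THE w. \<exists>z\<in>Pvecs m. P = proj_pt z \<and> w = Wvec m e z)"

definition Winv :: "nat \<Rightarrow> (nat \<Rightarrow> int) \<Rightarrow> complex \<Rightarrow> (nat \<Rightarrow> complex) set set" where
  "Winv m e s = {P \<in> Pspace m. W m e P = s}"

definition Fo :: "nat \<Rightarrow> (nat \<Rightarrow> int) \<Rightarrow> complex \<Rightarrow> (nat \<Rightarrow> complex) set set" where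
  "Fo d a t = {P \<in> Winv d a t. \<exists>z\<in>Pvecs d. P = proj_pt z \<and> z 0 + z 1 \<noteq> 0}"

definition psi_vec :: "(nat \<Rightarrow> complex) \<Rightarrow> (nat \<Rightarrow> complex)" where
  "psi_vec z = (\<lambda>i. if i = 0 then z 0 else if i = 1 then z 1
                   else if i = 2 then - (z 0 + z 1) else 0)"

definition dirD :: "((nat \<Rightarrow> complex) \<Rightarrow> complex) \<Rightarrow> (nat \<Rightarrow> complex) \<Rightarrow> (nat \<Rightarrow> complex) \<Rightarrow> complex" where
  "dirD g z v = deriv (\<lambda>s. g (\<lambda>i. z i + s * v i)) 0"

definition tangent :: "nat \<Rightarrow> (nat \<Rightarrow> complex) \<Rightarrow> bool" where
  "tangent d v \<longleftrightarrow> (\<forall>i>d+1. v i = 0) \<and> (\<Sum>i\<le>d+1. v i) = 0"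

text \<open>[z] is a critical point of Psi^t restricted to the fibre F_t: the differentials of
  Psi (in the global affine coordinate Z_1/Z_0 of P_1) and of W_a are linearly dependent on the
  tangent space of P_d at [z].\<close>
definition crit_point :: "nat \<Rightarrow> (nat \<Rightarrow> int) \<Rightarrow> (nat \<Rightarrow> complex) \<Rightarrow> bool" where
  "crit_point d a z \<longleftrightarrow>
     (\<exists>l m. (l, m) \<noteq> (0, 0) \<and>
        (\<forall>v. tangent d v \<longrightarrow>
           l * dirD (\<lambda>w. w 1 / w 0) z v + m * dirD (Wvec d a) z v = 0))"

definition crit_values :: "nat \<Rightarrow> (nat \<Rightarrow> int) \<Rightarrow> complex \<Rightarrow> (nat \<Rightarrow> complex) set set" where
  "crit_values d a t = {proj_pt (psi_vec z) | z. z \<in> Pvecs d \<and> proj_pt z \<in> Fo d a t \<and> crit_point d a z}"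

definition bvec :: "(nat \<Rightarrow> int) \<Rightarrow> nat \<Rightarrow> int" where
  "bvec a i = (if i = 0 then a 0 + a 1 else a (i + 1))"

definition cvec :: "(nat \<Rightarrow> int) \<Rightarrow> nat \<Rightarrow> int" where
  "cvec a i = (if i = 0 then a 0 else if i = 1 then a 1 else if i = 2 then - a 0 - a 1 else 0)"

definition qb :: "nat \<Rightarrow> (nat \<Rightarrow> int) \<Rightarrow> complex" where
  "qb d b = (\<Prod>i\<le>d. (of_int (b i) :: complex) powi b i)"

end

theory Submission
  imports Defs
begin

text \<open>By Lagrange's condition on the tangent space \<open>\<Sum> v\<^sub>i = 0\<close>, a point [Z] of the fibre is
  critical for \<open>\<Psi>\<close> exactly when the logarithmic gradient \<open>(a\<^sub>i / Z\<^sub>i)\<^sub>i\<close> of \<open>W\<^sub>a\<close> agrees, up to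
  constants, with the gradient of \<open>Z\<^sub>1 / Z\<^sub>0\<close>. This forces \<open>Z\<^sub>i / a\<^sub>i\<close> (\<open>i \<ge> 2\<close>) and
  \<open>(Z\<^sub>0 + Z\<^sub>1) / (a\<^sub>0 + a\<^sub>1)\<close> to be one common value, so [Z] has a representative with
  \<open>Z\<^sub>i = a\<^sub>i\<close> for \<open>i \<ge> 2\<close> and \<open>Z\<^sub>0 + Z\<^sub>1 = a\<^sub>0 + a\<^sub>1\<close>. On such representatives
  \<open>W\<^sub>c(\<Psi>(Z)) = (-1)\<^bsup>c\<^sub>2\<^esup> W\<^sub>a(Z) / q\<^sub>b\<close>, and every point of \<open>P\<^sub>1\<close> is the image of one of them,
  since they leave \<open>Z\<^sub>0, Z\<^sub>1\<close> free up to their sum.\<close>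

lemma proj_pt_mult: "(c::complex) \<noteq> 0 \<Longrightarrow> proj_pt (\<lambda>i. c * z i) = proj_pt z"
  unfolding proj_pt_def
  by (auto simp: fun_eq_iff intro: exI[where x = "_ * c"] exI[where x = "_ / c"])

lemma proj_pt_eqD:
  assumes "proj_pt z = proj_pt z'"
  shows "\<exists>c. c \<noteq> 0 \<and> z' = (\<lambda>i. c * z i)"
proof -
  have "z' \<in> proj_pt z'" unfolding proj_pt_def by (auto intro: exI[where x = 1])
  then show ?thesis using assms unfolding proj_pt_def by auto
qed

lemma Pvecs_mult: "z \<in> Pvecs m \<Longrightarrow> (c::complex) \<noteq> 0 \<Longrightarrow> (\<lambda>i. c * z i) \<in> Pvecs m"
  unfolding Pvecs_def mem_Collect_eq sum_distrib_left[symmetric] by simp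

lemma prod_powi_const: "(c::complex) \<noteq> 0 \<Longrightarrow> (\<Prod>i\<in>A. c powi e i) = c powi (\<Sum>i\<in>A. e i)"
  by (induction A rule: infinite_finite_induct) (auto simp: power_int_add)

lemma Wvec_mult:
  assumes "(c::complex) \<noteq> 0" "(\<Sum>i\<le>m+1. e i) = 0"
  shows "Wvec m e (\<lambda>i. c * z i) = Wvec m e z"
proof -
  have "Wvec m e (\<lambda>i. c * z i) = (\<Prod>i\<le>m+1. c powi e i) * Wvec m e z"
    unfolding Wvec_def by (simp add: power_int_mult_distrib prod.distrib)
  also have "\<dots> = Wvec m e z" by (simp only: prod_powi_const[OF assms(1)] assms(2)) simp
  finally show ?thesis .
qed

lemma W_proj_pt:
  assumes "z \<in> Pvecs m" "(\<Sum>i\<le>m+1. e i) = 0"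
  shows "W m e (proj_pt z) = Wvec m e z"
  unfolding W_def
proof (rule the_equality)
  show "\<exists>z'\<in>Pvecs m. proj_pt z = proj_pt z' \<and> Wvec m e z = Wvec m e z'"
    using assms(1) by blast
next
  fix w assume "\<exists>z'\<in>Pvecs m. proj_pt z = proj_pt z' \<and> w = Wvec m e z'"
  then obtain z' where "proj_pt z = proj_pt z'" "w = Wvec m e z'" by blast
  then show "w = Wvec m e z"
    using proj_pt_eqD Wvec_mult[OF _ assms(2)] by metis
qed

lemma psi_vec_mult: "psi_vec (\<lambda>i. c * z i) = (\<lambda>i. c * psi_vec z i)"
  unfolding psi_vec_def by (simp add: fun_eq_iff algebra_simps)

lemma psi_vec_in_Pvecs:
  assumes "z \<in> Pvecs d" "z 0 + z 1 \<noteq> 0"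
  shows "psi_vec z \<in> Pvecs 1"
proof -
  have "z 0 \<noteq> 0" "z 1 \<noteq> 0" using assms(1) unfolding Pvecs_def by auto
  moreover have "i \<le> 2 \<Longrightarrow> i = 0 \<or> i = 1 \<or> i = 2" for i :: nat by auto
  ultimately show ?thesis
    using assms(2) unfolding Pvecs_def psi_vec_def by (auto simp: numeral_2_eq_2 add_eq_0_iff)
qed

lemma sum_atMost_split_first_two:
  "(n::nat) \<ge> 1 \<Longrightarrow> (\<Sum>k\<le>n. f k) = f 0 + f 1 + (\<Sum>k=2..n. f k)"
  by (simp add: atMost_atLeast0 sum.atLeast_Suc_atMost numeral_2_eq_2 add.assoc)

lemma prod_atMost_split_first_two:
  "(n::nat) \<ge> 1 \<Longrightarrow> (\<Prod>k\<le>n. f k) = f 0 * f 1 * (\<Prod>k=2..n. f k)"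
  by (simp add: atMost_atLeast0 prod.atLeast_Suc_atMost numeral_2_eq_2 mult.assoc)

lemma tangent_annihilator_iff:
  "(\<forall>v. tangent d v \<longrightarrow> (\<Sum>k\<le>d+1. c k * v k) = 0) \<longleftrightarrow> (\<forall>k\<le>d+1. c k = (c 0 :: complex))"
proof
  assume const: "\<forall>k\<le>d+1. c k = c 0"
  show "\<forall>v. tangent d v \<longrightarrow> (\<Sum>k\<le>d+1. c k * v k) = 0"
  proof (intro allI impI)
    fix v assume "tangent d v"
    have "(\<Sum>k\<le>d+1. c k * v k) = c 0 * (\<Sum>k\<le>d+1. v k)"
      unfolding sum_distrib_left by (rule sum.cong[OF refl]) (metis atMost_iff const)
    then show "(\<Sum>k\<le>d+1. c k * v k) = 0" using \<open>tangent d v\<close> unfolding tangent_def by simp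
  qed
next
  assume annih: "\<forall>v. tangent d v \<longrightarrow> (\<Sum>k\<le>d+1. c k * v k) = 0"
  show "\<forall>k\<le>d+1. c k = c 0"
  proof (intro allI impI)
    fix k assume k: "k \<le> d+1"
    define v :: "nat \<Rightarrow> complex" where "v j = of_bool (j = k) - of_bool (j = 0)" for j
    have singletons: "{..d+1} \<inter> {j. j = k} = {k}" "{..d+1} \<inter> {j. j = 0} = {0}" using k by auto
    have "(\<Sum>j\<le>d+1. v j) = 0" "(\<Sum>j\<le>d+1. c j * v j) = c k - c 0"
      unfolding v_def sum_subtractf right_diff_distrib singletons
        sum_of_bool_eq[OF finite_atMost finite_atMost] sum_mult_of_bool_eq[OF finite_atMost]
      by simp_all
    moreover have "tangent d v" if "(\<Sum>j\<le>d+1. v j) = 0"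
      using that k unfolding tangent_def v_def by auto
    ultimately show "c k = c 0" using annih by auto
  qed
qed

definition ratio_grad :: "(nat \<Rightarrow> complex) \<Rightarrow> nat \<Rightarrow> complex" where
  "ratio_grad z k = (if k = 0 then - z 1 / (z 0)\<^sup>2 else if k = 1 then 1 / z 0 else 0)"

lemma dirD_ratio:
  assumes "z 0 \<noteq> 0"
  shows "dirD (\<lambda>w. w 1 / w 0) z v = (\<Sum>k\<le>d+1. ratio_grad z k * v k)"
proof -
  have "dirD (\<lambda>w. w 1 / w 0) z v = (v 1 * z 0 - z 1 * v 0) / (z 0)\<^sup>2"
    unfolding dirD_def using assms
    by (intro DERIV_imp_deriv) (auto intro!: derivative_eq_intros simp: field_simps power2_eq_square)
  also have "\<dots> = (\<Sum>k\<le>d+1. ratio_grad z k * v k)"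
    using assms by (simp add: sum_atMost_split_first_two ratio_grad_def field_simps power2_eq_square)
  finally show ?thesis .
qed

lemma dirD_Wvec:
  assumes "\<forall>i\<le>m+1. z i \<noteq> 0"
  shows "dirD (Wvec m e) z v = (\<Sum>k\<le>m+1. Wvec m e z * (of_int (e k) / z k) * v k)"
proof -
  let ?f = "\<lambda>i s. (z i + s * v i) powi e i"
  have "((\<lambda>s. \<Prod>i\<le>m+1. ?f i s) has_field_derivative
     (\<Prod>i\<le>m+1. ?f i 0) * (\<Sum>i\<le>m+1. v i * (of_int (e i) * (z i + 0 * v i) powi (e i - 1)) / ?f i 0)) (at 0)"
    using assms by (intro has_field_derivative_prod') (auto intro!: derivative_eq_intros)
  moreover have "(\<Sum>i\<le>m+1. v i * (of_int (e i) * (z i + 0 * v i) powi (e i - 1)) / ?f i 0)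
      = (\<Sum>i\<le>m+1. of_int (e i) / z i * v i)"
    using assms by (intro sum.cong) (auto simp: power_int_diff field_simps)
  ultimately have "((\<lambda>s. Wvec m e (\<lambda>i. z i + s * v i)) has_field_derivative
      Wvec m e z * (\<Sum>i\<le>m+1. of_int (e i) / z i * v i)) (at 0)"
    unfolding Wvec_def by simp
  then have "dirD (Wvec m e) z v = Wvec m e z * (\<Sum>i\<le>m+1. of_int (e i) / z i * v i)"
    unfolding dirD_def by (rule DERIV_imp_deriv)
  then show ?thesis by (simp only: sum_distrib_left mult.assoc)
qed

lemma crit_point_iff:
  assumes "z \<in> Pvecs d"
  shows "crit_point d a z \<longleftrightarrow> (\<exists>l m. (l, m) \<noteq> (0, 0) \<and> (\<forall>k\<le>d+1.
           l * ratio_grad z k + m * Wvec d a z * (of_int (a k) / z k)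
         = l * ratio_grad z 0 + m * Wvec d a z * (of_int (a 0) / z 0)))"
proof -
  have nz: "\<forall>i\<le>d+1. z i \<noteq> 0" using assms unfolding Pvecs_def by auto
  then have nz0: "z 0 \<noteq> 0" by simp
  have "l * dirD (\<lambda>w. w 1 / w 0) z v + m * dirD (Wvec d a) z v
      = (\<Sum>k\<le>d+1. (l * ratio_grad z k + m * Wvec d a z * (of_int (a k) / z k)) * v k)" for l m v
    unfolding dirD_ratio[where z = z and d = d, OF nz0] dirD_Wvec[OF nz]
    by (simp only: sum_distrib_left distrib_right sum.distrib mult.assoc)
  then show ?thesis unfolding crit_point_def by (simp only: tangent_annihilator_iff)
qed

definition normalized_rep :: "nat \<Rightarrow> (nat \<Rightarrow> int) \<Rightarrow> (nat \<Rightarrow> complex) \<Rightarrow> bool" where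
  "normalized_rep d a z \<longleftrightarrow>
     (\<forall>i. 2 \<le> i \<and> i \<le> d+1 \<longrightarrow> z i = of_int (a i)) \<and> z 0 + z 1 = of_int (a 0 + a 1)"

lemma crit_point_imp_normalized_multiple:
  assumes z: "z \<in> Pvecs d" and d: "d \<ge> 1" and W: "Wvec d a z \<noteq> 0" and a2: "a 2 \<noteq> 0"
    and crit: "crit_point d a z"
  shows "\<exists>\<mu>. \<mu> \<noteq> 0 \<and> normalized_rep d a (\<lambda>i. \<mu> * z i)"
proof -
  have nz: "\<forall>i\<le>d+1. z i \<noteq> 0" using z unfolding Pvecs_def by auto
  then have nz0: "z 0 \<noteq> 0" and nz1: "z 1 \<noteq> 0" and nz2: "z 2 \<noteq> 0" using d by auto
  obtain l m where lm: "(l, m) \<noteq> (0, 0)" and eq: "\<forall>k\<le>d+1.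
      l * ratio_grad z k + m * Wvec d a z * (of_int (a k) / z k)
    = l * ratio_grad z 0 + m * Wvec d a z * (of_int (a 0) / z 0)"
    using crit unfolding crit_point_iff[OF z] by blast
  define K where "K = m * Wvec d a z"
  define \<mu> where "\<mu> = of_int (a 2) / z 2"
  have eq2: "l * ratio_grad z k + K * (of_int (a k) / z k) = K * \<mu>" if "k \<le> d+1" for k
    using eq[rule_format, OF that] eq[rule_format, of 2] d unfolding K_def \<mu>_def
    by (simp add: ratio_grad_def)
  have e0: "- l * z 1 / (z 0)\<^sup>2 + K * (of_int (a 0) / z 0) = K * \<mu>"
    using eq2[of 0] by (simp add: ratio_grad_def)
  have e1: "l / z 0 + K * (of_int (a 1) / z 1) = K * \<mu>"
    using eq2[of 1] by (simp add: ratio_grad_def)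
  have "K \<noteq> 0"
  proof
    assume "K = 0"
    then have "m = 0" "l = 0" using W e1 nz0 unfolding K_def by auto
    then show False using lm by simp
  qed
  have "\<mu> * z i = of_int (a i)" if "2 \<le> i" "i \<le> d+1" for i
    using eq2[OF that(2)] that \<open>K \<noteq> 0\<close> nz by (simp add: ratio_grad_def field_simps)
  moreover have "\<mu> * z 0 + \<mu> * z 1 = of_int (a 0) + of_int (a 1)"
  proof -
    \<comment> \<open>\<open>z\<^sub>0 \<cdot> e0 + z\<^sub>1 \<cdot> e1\<close> eliminates the multiplier \<open>l\<close>\<close>
    have "K * of_int (a 0) = K * \<mu> * z 0 + l * z 1 / z 0"
      using e0 nz0 by (simp add: field_simps power2_eq_square)
    moreover have "K * of_int (a 1) = K * \<mu> * z 1 - l * z 1 / z 0"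
      using e1 nz0 nz1 by (simp add: field_simps)
    ultimately have "K * (of_int (a 0) + of_int (a 1)) = K * (\<mu> * z 0 + \<mu> * z 1)"
      by (simp add: algebra_simps)
    then show ?thesis using \<open>K \<noteq> 0\<close> by simp
  qed
  moreover have "\<mu> \<noteq> 0" unfolding \<mu>_def using a2 nz2 by simp
  ultimately show ?thesis unfolding normalized_rep_def by auto
qed

lemma normalized_rep_imp_crit_point:
  assumes z: "z \<in> Pvecs d" and W: "Wvec d a z \<noteq> 0" and norm: "normalized_rep d a z"
  shows "crit_point d a z"
proof -
  have nz: "\<forall>i\<le>d+1. z i \<noteq> 0" using z unfolding Pvecs_def by auto
  have a0: "of_int (a 0) = z 0 + z 1 - of_int (a 1)"
    using norm unfolding normalized_rep_def by (simp add: algebra_simps)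
  define l where "l = z 0 - of_int (a 1) * z 0 / z 1"
  define m where "m = 1 / Wvec d a z"
  have "l * ratio_grad z k + m * Wvec d a z * (of_int (a k) / z k) = 1" if "k \<le> d+1" for k
  proof -
    consider "k = 0" | "k = 1" | "2 \<le> k" by linarith
    then show ?thesis
    proof cases
      case 1
      then show ?thesis using nz W unfolding 1 l_def m_def ratio_grad_def a0
        by (simp add: field_simps power2_eq_square)
    next
      case 2
      then show ?thesis using nz W unfolding l_def m_def ratio_grad_def by (simp add: field_simps)
    next
      case 3
      then have "z k = of_int (a k)" "z k \<noteq> 0"
        using that nz norm unfolding normalized_rep_def by auto
      then show ?thesis using 3 W unfolding m_def ratio_grad_def by simp
    qed
  qed
  moreover have "(l, m) \<noteq> (0, 0)" unfolding m_def using W by simp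
  ultimately show ?thesis unfolding crit_point_iff[OF z] by (metis le0)
qed

lemma Wvec_psi_vec_normalized:
  assumes norm: "normalized_rep d a w"
    and anz: "\<forall>i\<le>d+1. a i \<noteq> 0" and a01: "a 0 + a 1 \<noteq> 0"
  shows "Wvec 1 (cvec a) (psi_vec w) = (-1) powi (cvec a 2) * Wvec d a w / qb d (bvec a)"
proof -
  define B where "B = (of_int (a 0 + a 1) :: complex)"
  define Q where "Q = (\<Prod>k=2..d+1. (of_int (a k) :: complex) powi a k)"
  have "B \<noteq> 0" unfolding B_def using a01 of_int_eq_0_iff by blast
  have "Q \<noteq> 0" unfolding Q_def using anz by (auto simp: prod_zero_iff)
  have "Wvec d a w = w 0 powi a 0 * w 1 powi a 1 * (\<Prod>k=2..d+1. w k powi a k)"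
    unfolding Wvec_def by (rule prod_atMost_split_first_two) simp
  also have "(\<Prod>k=2..d+1. w k powi a k) = Q"
    using norm unfolding Q_def normalized_rep_def by (intro prod.cong) auto
  finally have W: "Wvec d a w = w 0 powi a 0 * w 1 powi a 1 * Q" .
  have "{..d} = insert 0 {1..d}" by auto
  then have "qb d (bvec a) = B powi (a 0 + a 1) * (\<Prod>i=1..d. (of_int (a (i+1)) :: complex) powi a (i+1))"
    unfolding qb_def B_def by (simp add: bvec_def)
  also have "(\<Prod>i=1..d. (of_int (a (i+1)) :: complex) powi a (i+1)) = Q"
  proof -
    have shift: "{2..d+1} = {Suc 1..Suc d}" by simp
    show ?thesis unfolding Q_def shift prod.shift_bounds_cl_Suc_ivl by simp
  qed
  finally have qb: "qb d (bvec a) = B powi (a 0 + a 1) * Q" .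
  have Wc: "Wvec 1 (cvec a) (psi_vec w) = w 0 powi a 0 * w 1 powi a 1 * (- B) powi (- a 0 - a 1)"
    unfolding Wvec_def psi_vec_def cvec_def B_def using norm unfolding normalized_rep_def
    by (simp add: numeral_2_eq_2 mult.assoc)
  have "(- B) powi (- a 0 - a 1) = (-1) powi (- a 0 - a 1) / B powi (a 0 + a 1)"
    by (simp add: power_int_mult_distrib[of "-1" B, simplified] power_int_minus[of B, simplified]
        divide_inverse flip: power_int_minus)
  then show ?thesis
    unfolding Wc W qb using \<open>B \<noteq> 0\<close> \<open>Q \<noteq> 0\<close> by (simp add: cvec_def)
qed

lemma normalized_rep_through_point:
  assumes y: "y \<in> Pvecs 1" and sum_a: "(\<Sum>i\<le>d+1. a i) = 0"
    and anz: "\<forall>i\<le>d+1. a i \<noteq> 0" and a01: "a 0 + a 1 \<noteq> 0"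
  shows "\<exists>w\<in>Pvecs d. normalized_rep d a w \<and> proj_pt (psi_vec w) = proj_pt y"
proof -
  have y_nz: "\<forall>i\<le>2. y i \<noteq> 0" and y_sum: "y 0 + y 1 + y 2 = 0" and y_big: "\<forall>i>2. y i = 0"
    using y unfolding Pvecs_def by (auto simp: numeral_2_eq_2)
  define c where "c = - of_int (a 0 + a 1) / y 2"
  have "(of_int (a 0 + a 1) :: complex) \<noteq> 0" using a01 of_int_eq_0_iff by blast
  then have "c \<noteq> 0" unfolding c_def using y_nz by (simp del: of_int_add)
  define y' where "y' = (\<lambda>i. c * y i)"
  have "y' 0 + y' 1 = c * (y 0 + y 1)" unfolding y'_def by (simp add: distrib_left)
  also have "y 0 + y 1 = - y 2" using y_sum by (simp add: eq_neg_iff_add_eq_0)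
  finally have y'01: "y' 0 + y' 1 = of_int (a 0 + a 1)"
    using y_nz unfolding c_def by (simp del: of_int_add)
  define w where "w i = (if i \<le> 1 then y' i else if i \<le> d+1 then of_int (a i) else 0)" for i
  have norm: "normalized_rep d a w" unfolding normalized_rep_def w_def using y'01 by auto
  have w01: "w 0 + w 1 = of_int (a 0 + a 1)" using y'01 by (simp add: w_def)
  have "(\<Sum>i\<le>d+1. w i) = w 0 + w 1 + (\<Sum>i=2..d+1. w i)"
    by (rule sum_atMost_split_first_two) simp
  also have "(\<Sum>i=2..d+1. w i) = (\<Sum>i=2..d+1. of_int (a i))"
    unfolding w_def by (intro sum.cong) auto
  also have "w 0 + w 1 + \<dots> = of_int (\<Sum>i\<le>d+1. a i)"
    unfolding w01 by (subst sum_atMost_split_first_two[of "d+1" a]) simp_all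
  finally have "(\<Sum>i\<le>d+1. w i) = 0" unfolding sum_a by simp
  moreover have "\<forall>i\<le>d+1. w i \<noteq> 0"
    using anz y_nz \<open>c \<noteq> 0\<close> unfolding w_def y'_def by auto
  ultimately have "w \<in> Pvecs d" unfolding Pvecs_def by (auto simp: w_def)
  moreover have "psi_vec w = y'"
  proof
    fix i :: nat
    consider "i = 0" | "i = 1" | "i = 2" | "i > 2" by linarith
    then show "psi_vec w i = y' i"
    proof cases
      case 3
      have "y' 2 = - of_int (a 0 + a 1)" unfolding y'_def c_def using y_nz by simp
      then show ?thesis unfolding 3 psi_vec_def w01 by simp
    next
      case 4
      then show ?thesis using y_big unfolding psi_vec_def y'_def by simp
    qed (simp_all add: psi_vec_def w_def)
  qed
  then have "proj_pt (psi_vec w) = proj_pt y"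
    unfolding y'_def using proj_pt_mult[OF \<open>c \<noteq> 0\<close>] by simp
  ultimately show ?thesis using norm by blast
qed

lemma crit_values_eq_normalized:
  assumes d: "d \<ge> 1" and sum_a: "(\<Sum>i\<le>d+1. a i) = 0" and anz: "\<forall>i\<le>d+1. a i \<noteq> 0"
    and a01: "a 0 + a 1 \<noteq> 0" and t: "t \<noteq> 0"
  shows "crit_values d a t
       = {proj_pt (psi_vec w) | w. w \<in> Pvecs d \<and> normalized_rep d a w \<and> Wvec d a w = t}"
proof (intro equalityI subsetI)
  fix P assume "P \<in> crit_values d a t"
  then obtain z where P: "P = proj_pt (psi_vec z)" and z: "z \<in> Pvecs d"
    and F: "proj_pt z \<in> Fo d a t" and crit: "crit_point d a z"
    unfolding crit_values_def by blast
  have Wz: "Wvec d a z = t" using F W_proj_pt[OF z sum_a] unfolding Fo_def Winv_def by simp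
  obtain \<mu> where "\<mu> \<noteq> 0" and norm: "normalized_rep d a (\<lambda>i. \<mu> * z i)"
    using crit_point_imp_normalized_multiple[OF z d _ _ crit] Wz t anz d by auto
  moreover have "P = proj_pt (psi_vec (\<lambda>i. \<mu> * z i))"
    unfolding P psi_vec_mult proj_pt_mult[OF \<open>\<mu> \<noteq> 0\<close>] ..
  moreover have "Wvec d a (\<lambda>i. \<mu> * z i) = t" using Wvec_mult[OF \<open>\<mu> \<noteq> 0\<close> sum_a] Wz by simp
  ultimately show "P \<in> {proj_pt (psi_vec w) | w. w \<in> Pvecs d \<and> normalized_rep d a w \<and> Wvec d a w = t}"
    using Pvecs_mult[OF z] by blast
next
  fix P assume "P \<in> {proj_pt (psi_vec w) | w. w \<in> Pvecs d \<and> normalized_rep d a w \<and> Wvec d a w = t}"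
  then obtain w where P: "P = proj_pt (psi_vec w)" and w: "w \<in> Pvecs d"
    and norm: "normalized_rep d a w" and Ww: "Wvec d a w = t" by blast
  have "w 0 + w 1 \<noteq> 0" using norm a01 unfolding normalized_rep_def by (metis of_int_eq_0_iff)
  then have "proj_pt w \<in> Fo d a t"
    using w Ww W_proj_pt[OF w sum_a] unfolding Fo_def Winv_def Pspace_def by blast
  moreover have "crit_point d a w" using normalized_rep_imp_crit_point[OF w _ norm] Ww t by simp
  ultimately show "P \<in> crit_values d a t" unfolding crit_values_def P using w by blast
qed

lemma Winv_cvec_eq_normalized:
  assumes sum_a: "(\<Sum>i\<le>d+1. a i) = 0" and anz: "\<forall>i\<le>d+1. a i \<noteq> 0" and a01: "a 0 + a 1 \<noteq> 0"
  shows "Winv 1 (cvec a) s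
       = {proj_pt (psi_vec w) | w. w \<in> Pvecs d \<and> normalized_rep d a w \<and> Wvec 1 (cvec a) (psi_vec w) = s}"
proof -
  have sum_c: "(\<Sum>i\<le>1+1. cvec a i) = 0" by (simp add: cvec_def numeral_2_eq_2)
  have psi: "psi_vec w \<in> Pvecs 1" if "w \<in> Pvecs d" "normalized_rep d a w" for w
    using that a01 by (intro psi_vec_in_Pvecs) (auto simp: normalized_rep_def simp del: of_int_add)
  show ?thesis
  proof (intro equalityI subsetI)
    fix P assume "P \<in> Winv 1 (cvec a) s"
    then obtain y where y: "y \<in> Pvecs 1" and P: "P = proj_pt y" and Wy: "W 1 (cvec a) P = s"
      unfolding Winv_def Pspace_def by blast
    obtain w where w: "w \<in> Pvecs d" "normalized_rep d a w" and Pw: "proj_pt (psi_vec w) = P"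
      using normalized_rep_through_point[OF y sum_a anz a01] P by blast
    then have "Wvec 1 (cvec a) (psi_vec w) = s" using Wy W_proj_pt[OF psi[OF w] sum_c] by simp
    then show "P \<in> {proj_pt (psi_vec w) | w. w \<in> Pvecs d \<and> normalized_rep d a w
                      \<and> Wvec 1 (cvec a) (psi_vec w) = s}"
      using w Pw by blast
  next
    fix P assume "P \<in> {proj_pt (psi_vec w) | w. w \<in> Pvecs d \<and> normalized_rep d a w
                          \<and> Wvec 1 (cvec a) (psi_vec w) = s}"
    then obtain w where w: "w \<in> Pvecs d" "normalized_rep d a w" and P: "P = proj_pt (psi_vec w)"
      and Ww: "Wvec 1 (cvec a) (psi_vec w) = s" by blast
    show "P \<in> Winv 1 (cvec a) s"
      unfolding Winv_def Pspace_def P using psi[OF w] Ww W_proj_pt[OF psi[OF w] sum_c] by blast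
  qed
qed

theorem corollary3p23:
  fixes d p :: nat and a :: "nat \<Rightarrow> int" and t :: complex
  assumes "d > 1"
    and "(\<Sum>i\<le>d+1. a i) = 0"
    and "\<forall>i\<le>d+1. a i \<noteq> 0"
    and "p \<ge> 1"
    and "\<forall>i\<le>d+1. i \<le> p \<longrightarrow> a i > 0"
    and "\<forall>i\<le>d+1. i > p \<longrightarrow> a i < 0"
    and "t \<noteq> 0"
  shows "crit_values d a t
           = Winv 1 (cvec a) ((-1) powi (cvec a 2) * t / qb d (bvec a))"
proof -
  have d: "d \<ge> 1" using assms(1) by simp
  \<comment> \<open>of the sign conditions only \<open>a\<^sub>0 + a\<^sub>1 \<noteq> 0\<close> is needed\<close>
  have "a 0 > 0" "a 1 > 0" using assms(4,5) by auto
  then have a01: "a 0 + a 1 \<noteq> 0" by simp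
  have "qb d (bvec a) \<noteq> 0"
    unfolding qb_def bvec_def using assms(3) a01 by (auto simp: prod_zero_iff)
  then have W_iff: "Wvec d a w = t \<longleftrightarrow>
      Wvec 1 (cvec a) (psi_vec w) = (-1) powi (cvec a 2) * t / qb d (bvec a)"
    if "normalized_rep d a w" for w
    unfolding Wvec_psi_vec_normalized[OF that assms(3) a01] by (auto simp: field_simps)
  have "crit_values d a t
      = {proj_pt (psi_vec w) | w. w \<in> Pvecs d \<and> normalized_rep d a w \<and> Wvec d a w = t}"
    by (rule crit_values_eq_normalized[OF d assms(2,3) a01 assms(7)])
  also have "\<dots> = {proj_pt (psi_vec w) | w. w \<in> Pvecs d \<and> normalized_rep d a w
      \<and> Wvec 1 (cvec a) (psi_vec w) = (-1) powi (cvec a 2) * t / qb d (bvec a)}"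
    using W_iff by blast
  also have "\<dots> = Winv 1 (cvec a) ((-1) powi (cvec a 2) * t / qb d (bvec a))"
    by (rule Winv_cvec_eq_normalized[symmetric, OF assms(2,3) a01])
  finally show ?thesis .
qed

end
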